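(* Assume $\beta^2\le\frac43-\mu$ for a constant $\mu>0$. There is $a_0>0$ depending only on $S$ and $\mu$ such that for all $0<a\le\min(a_0,\lambda/2)$ and every $t\ge0$: if $x^s_{3N/4}(t)\le0$, then $$\mathbb E\left[\Phi(x^s(t+1))\,\middle|\,x^s(t)\right]\le\left(1-\frac{\mu a}{2N}\right)\Phi(x^s(t))+1.$$
   Context: Weighted balls into weighted bins: $n$ bins with positive integer weights $N_1,\dots,N_n$, $N=\sum_iN_i$; $\mathcal D$ on $[n]$ is $(\alpha,\beta)$-biased, i.e. $\frac{N_i}{\alpha N}\le\Pr_{\mathcal D}[i]\le\frac{\beta N_i}{N}$, $\alpha,\beta\ge1$. Ball weights $w(t)$ are i.i.d. from $\mathcal W$ on $[0,\infty)$ with $\mathbb E[\mathcal W]=1$ and $M(z)=\mathbb E[e^{z\mathcal W}]$ finite at $z=\lambda$ for some $\lambda>0$; $S\ge1$ is a constant with $M''(z)\le2S$ for all $|z|<\lambda/2$. Each round two bins are sampled independently from $\mathcal D$ and the ball goes to the sampled bin with smaller value $v_i(t-1)=w_i(t-1)/N_i$. Slot formulation: bin $i$ consists of $N_i$ unit slots; the normalized slot vector $x^s(t)\in\mathbb R^N$ has, for each slot of bin $i$, the entry $v_i(t)-\frac1N\sum_{t'\le t}w(t')$, indexed so that $x^s_1(t)\ge\dots\ge x^s_N(t)$; fractional indices such as $3N/4$ are rounded up. $\Phi(y)=\sum_je^{ay_j}$. *)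

theory Defs
  imports "HOL-Probability.Probability"
begin

text \<open>Bins are indexed by 0..n-1; bin i has positive integer weight (number of slots) Nw i.
  L i is the load w_i(t) of bin i; the total ball weight so far is the sum of all loads.\<close>

definition total_slots :: "nat \<Rightarrow> (nat \<Rightarrow> nat) \<Rightarrow> nat" where
  "total_slots n Nw = (\<Sum>i<n. Nw i)"

definition norm_value :: "nat \<Rightarrow> (nat \<Rightarrow> nat) \<Rightarrow> (nat \<Rightarrow> real) \<Rightarrow> nat \<Rightarrow> real" where
  "norm_value n Nw L i = L i / real (Nw i) - (\<Sum>k<n. L k) / real (total_slots n Nw)"

text \<open>Normalized slot vector, sorted non-increasingly (as a list of length N; entry number k,
  1-based, is the list element at position k-1).\<close>
definition slot_vector :: "nat \<Rightarrow> (nat \<Rightarrow> nat) \<Rightarrow> (nat \<Rightarrow> real) \<Rightarrow> real list" where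
  "slot_vector n Nw L =
     rev (sort (concat (map (\<lambda>i. replicate (Nw i) (norm_value n Nw L i)) [0..<n])))"

definition Phi :: "real \<Rightarrow> real list \<Rightarrow> real" where
  "Phi a y = sum_list (map (\<lambda>yj. exp (a * yj)) y)"

definition chosen_bin ::
  "(nat \<Rightarrow> nat) \<Rightarrow> (nat \<Rightarrow> nat \<Rightarrow> nat) \<Rightarrow> (nat \<Rightarrow> real) \<Rightarrow> nat \<Rightarrow> nat \<Rightarrow> nat" where
  "chosen_bin Nw tb L i j =
     (if L i / real (Nw i) < L j / real (Nw j) then i
      else if L j / real (Nw j) < L i / real (Nw i) then j
      else tb i j)"

definition next_load ::
  "(nat \<Rightarrow> nat) \<Rightarrow> (nat \<Rightarrow> nat \<Rightarrow> nat) \<Rightarrow> (nat \<Rightarrow> real) \<Rightarrow> nat \<Rightarrow> nat \<Rightarrow> real \<Rightarrow> (nat \<Rightarrow> real)" where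
  "next_load Nw tb L i j w = (let k = chosen_bin Nw tb L i j in L(k := L k + w))"

definition mgf :: "real measure \<Rightarrow> real \<Rightarrow> real" where
  "mgf W z = (\<integral>w. exp (z * w) \<partial>W)"

end

theory Submission
  imports Defs
begin

(*
  Write the potential as a sum over bins, Phi = sum_k N_k exp(a y_k), with y_k the normalized
  value of bin k. A ball of weight w put into bin k multiplies the term of bin b by exp(z_b w),
  where z_k = a/N_k - a/N and z_b = -a/N for b ~= k. Averaging over w with the Taylor bound
  M(z) <= 1 + z + S z^2 (from M'' <= 2S) gives
    E Phi' <= (1 - a/N + S a^2/N^2) Phi + (a + S a^2) exp(a y_k).
  The chosen bin has smaller value than both sampled bins, so it lies in an upward closed set U
  of bins with probability at most D(U)^2 <= (beta N_U / N)^2. The bins of positive value carry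
  at most 3N/4 slots, so summing over the superlevel sets of exp(a y) (layer cake) yields
    E exp(a y_chosen) <= (3 beta^2 / 4N) Phi + 1.
  With beta^2 <= 4/3 - mu and a <= mu/(8S), the coefficient of Phi is at most 1 - mu a/(2N).
*)

section \<open>Moment generating function\<close>

lemma power_le_fact_mult_exp:
  fixes x :: real assumes "0 \<le> x" shows "x ^ k \<le> fact k * exp x"
proof -
  have "(\<Sum>n\<in>{k}. x ^ n /\<^sub>R fact n) \<le> (\<Sum>n. x ^ n /\<^sub>R fact n)"
    by (rule sum_le_suminf[OF summable_exp_generic]) (use assms in auto)
  then have "x ^ k / fact k \<le> exp x" by (simp add: exp_def divide_inverse mult.commute)
  then show ?thesis by (simp add: divide_le_eq mult.commute)
qed

lemma power_mult_exp_le: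
  fixes w z d :: real assumes w: "0 \<le> w" and d: "0 < d"
  shows "w ^ k * exp (z * w) \<le> fact k / d ^ k * exp ((\<bar>z\<bar> + d) * w)"
proof -
  have "(d * w) ^ k \<le> fact k * exp (d * w)"
    using w d by (intro power_le_fact_mult_exp) simp
  then have "w ^ k \<le> fact k / d ^ k * exp (d * w)"
    using d by (simp add: power_mult_distrib field_simps)
  moreover have "exp (z * w) \<le> exp (\<bar>z\<bar> * w)"
    using w by (simp add: mult_right_mono)
  ultimately have "w ^ k * exp (z * w) \<le> fact k / d ^ k * exp (d * w) * exp (\<bar>z\<bar> * w)"
    using w d by (intro mult_mono) simp_all
  then show ?thesis by (simp add: algebra_simps flip: exp_add)
qed

lemma abs_exp_minus_one_minus_le: "\<bar>exp y - 1 - y\<bar> \<le> exp \<bar>y\<bar> * y\<^sup>2" for y :: real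
proof -
  have "exp y - 1 - y \<ge> 0" using exp_ge_add_one_self[of y] by linarith
  then show ?thesis using Taylor_exp_field[of y 1] by (simp add: power2_eq_square)
qed

lemma power_mult_exp_remainder_le:
  fixes w z h d :: real assumes w: "0 \<le> w" and d: "0 < d" and h: "\<bar>h\<bar> \<le> d"
  shows "\<bar>w ^ k * exp (z * w) * (exp (h * w) - 1 - h * w)\<bar>
    \<le> h\<^sup>2 * (fact (k + 2) / d ^ (k + 2)) * exp ((\<bar>z\<bar> + 2 * d) * w)"
proof -
  have "\<bar>exp (h * w) - 1 - h * w\<bar> \<le> exp (\<bar>h\<bar> * w) * (h\<^sup>2 * w\<^sup>2)"
    using abs_exp_minus_one_minus_le[of "h * w"] w by (simp add: abs_mult power_mult_distrib)
  then have "\<bar>w ^ k * exp (z * w) * (exp (h * w) - 1 - h * w)\<bar>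
      \<le> w ^ k * exp (z * w) * (exp (\<bar>h\<bar> * w) * (h\<^sup>2 * w\<^sup>2))"
    using w by (simp add: abs_mult mult_left_mono)
  also have "\<dots> = h\<^sup>2 * (w ^ (k + 2) * exp ((z + \<bar>h\<bar>) * w))"
    by (simp add: algebra_simps exp_add power2_eq_square power_add)
  also have "\<dots> \<le> h\<^sup>2 * (fact (k + 2) / d ^ (k + 2) * exp ((\<bar>z + \<bar>h\<bar>\<bar> + d) * w))"
    using w d by (intro mult_left_mono power_mult_exp_le) simp_all
  also have "\<dots> \<le> h\<^sup>2 * (fact (k + 2) / d ^ (k + 2) * exp ((\<bar>z\<bar> + 2 * d) * w))"
    using w d h by (intro mult_left_mono mult_right_mono) (auto intro!: mult_right_mono)
  finally show ?thesis by (simp add: mult.assoc)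
qed

lemma has_real_derivative_of_quadratic_remainder:
  fixes f :: "real \<Rightarrow> real"
  assumes r: "r > 0" and rem: "\<And>h. \<bar>h\<bar> < r \<Longrightarrow> \<bar>f (z + h) - f z - h * D\<bar> \<le> K * h\<^sup>2"
  shows "(f has_real_derivative D) (at z)"
proof -
  have "eventually (\<lambda>y. norm ((f y - f z) / (y - z) - D) \<le> K * \<bar>y - z\<bar>) (at z)"
    unfolding eventually_at
  proof (intro exI[of _ r] conjI ballI allI impI)
    fix y assume y: "y \<noteq> z \<and> dist y z < r"
    have "\<bar>f (z + (y - z)) - f z - (y - z) * D\<bar> \<le> K * (y - z)\<^sup>2"
      using y by (intro rem) (simp add: dist_real_def)
    moreover have "(f y - f z) / (y - z) - D = (f y - f z - (y - z) * D) / (y - z)"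
      using y by (simp add: field_simps)
    ultimately show "norm ((f y - f z) / (y - z) - D) \<le> K * \<bar>y - z\<bar>"
      using y by (simp add: abs_divide divide_le_eq power2_eq_square abs_mult mult.assoc)
  qed (use r in auto)
  moreover have "((\<lambda>y. K * \<bar>y - z\<bar>) \<longlongrightarrow> 0) (at z)"
    by (rule tendsto_eq_intros refl | simp)+
  ultimately have "((\<lambda>y. (f y - f z) / (y - z) - D) \<longlongrightarrow> 0) (at z)"
    by (rule Lim_null_comparison)
  then show ?thesis by (simp add: has_field_derivative_iff LIM_zero_iff)
qed

locale exp_moment_weight = prob_space W for W :: "real measure" +
  fixes lam :: real
  assumes sets_eq_borel: "sets W = sets borel"
    and AE_nonneg: "AE w in W. 0 \<le> w"
    and lam_pos: "lam > 0"
    and integrable_exp_lam: "integrable W (\<lambda>w. exp (lam * w))"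
begin

lemma borel_measurable_W: "f \<in> borel_measurable borel \<Longrightarrow> f \<in> borel_measurable W"
  using measurable_cong_sets[OF sets_eq_borel refl, of borel] by metis

definition mgf_deriv :: "nat \<Rightarrow> real \<Rightarrow> real" where
  "mgf_deriv k z = (\<integral>w. w ^ k * exp (z * w) \<partial>W)"

lemma integrable_mgf_deriv:
  assumes z: "\<bar>z\<bar> < lam"
  shows "integrable W (\<lambda>w. w ^ k * exp (z * w))"
proof (rule Bochner_Integration.integrable_bound)
  define d where "d = lam - \<bar>z\<bar>"
  have d: "d > 0" using z by (simp add: d_def)
  show "integrable W (\<lambda>w. fact k / d ^ k * exp (lam * w))"
    using integrable_exp_lam by (rule integrable_mult_right)
  show "(\<lambda>w. w ^ k * exp (z * w)) \<in> borel_measurable W"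
    by (rule borel_measurable_W) measurable
  show "AE w in W. norm (w ^ k * exp (z * w)) \<le> norm (fact k / d ^ k * exp (lam * w))"
    using AE_nonneg
  proof eventually_elim
    case (elim w)
    then show ?case using power_mult_exp_le[OF elim d, of k z] d unfolding d_def by simp
  qed
qed

lemma mgf_deriv_has_derivative:
  assumes z: "\<bar>z\<bar> < lam"
  shows "(mgf_deriv k has_real_derivative mgf_deriv (Suc k) z) (at z)"
proof -
  define d where "d = (lam - \<bar>z\<bar>) / 2"
  have d: "d > 0" using z by (simp add: d_def)
  have lam_eq: "\<bar>z\<bar> + 2 * d = lam" by (simp add: d_def field_simps)
  define C where "C = fact (k + 2) / d ^ (k + 2)"
  show ?thesis
  proof (rule has_real_derivative_of_quadratic_remainder[OF d])
    fix h :: real assume h: "\<bar>h\<bar> < d"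
    have hz: "\<bar>z + h\<bar> < lam" using h z by (simp add: d_def)
    define f where "f w = w ^ k * exp (z * w) * (exp (h * w) - 1 - h * w)" for w
    have f_eq: "f w = w ^ k * exp ((z + h) * w) - w ^ k * exp (z * w) - h * (w ^ Suc k * exp (z * w))"
      for w by (simp add: f_def algebra_simps exp_add)
    note integrable = integrable_mgf_deriv[OF z, of k] integrable_mgf_deriv[OF z, of "Suc k"]
      integrable_mgf_deriv[OF hz, of k]
    have "mgf_deriv k (z + h) - mgf_deriv k z - h * mgf_deriv (Suc k) z = (\<integral>w. f w \<partial>W)"
      unfolding f_eq mgf_deriv_def using integrable by simp
    also have "\<bar>\<dots>\<bar> \<le> (\<integral>w. \<bar>f w\<bar> \<partial>W)"
      using integral_norm_bound[of W f] by simp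
    also have "\<dots> \<le> (\<integral>w. h\<^sup>2 * C * exp (lam * w) \<partial>W)"
    proof (rule integral_mono_AE')
      show "integrable W (\<lambda>w. h\<^sup>2 * C * exp (lam * w))"
        using integrable_exp_lam by simp
      show "AE w in W. 0 \<le> h\<^sup>2 * C * exp (lam * w)"
        using d by (simp add: C_def)
      show "AE w in W. \<bar>f w\<bar> \<le> h\<^sup>2 * C * exp (lam * w)"
        using AE_nonneg
      proof eventually_elim
        case (elim w)
        then show ?case
          using power_mult_exp_remainder_le[OF elim d, of h k z] h by (simp add: f_def C_def lam_eq)
      qed
    qed
    also have "\<dots> = (C * (\<integral>w. exp (lam * w) \<partial>W)) * h\<^sup>2" by simp
    finally show "\<bar>mgf_deriv k (z + h) - mgf_deriv k z - h * mgf_deriv (Suc k) z\<bar>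
        \<le> (C * (\<integral>w. exp (lam * w) \<partial>W)) * h\<^sup>2" .
  qed
qed

lemma mgf_eq_mgf_deriv: "mgf W = mgf_deriv 0"
  by (simp add: fun_eq_iff mgf_def mgf_deriv_def)

lemma deriv_deriv_mgf:
  assumes z: "\<bar>z\<bar> < lam"
  shows "deriv (deriv (mgf W)) z = mgf_deriv 2 z"
proof -
  have "(deriv (mgf W) has_real_derivative mgf_deriv 2 z) (at z)"
  proof (rule has_field_derivative_transform_within_open)
    show "(mgf_deriv 1 has_real_derivative mgf_deriv 2 z) (at z)"
      using mgf_deriv_has_derivative[OF z, of 1] by (simp add: numeral_2_eq_2)
    show "mgf_deriv 1 y = deriv (mgf W) y" if "y \<in> {-lam<..<lam}" for y
      using mgf_deriv_has_derivative[of y 0] that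
      by (simp add: mgf_eq_mgf_deriv DERIV_imp_deriv abs_less_iff)
  qed (use z in auto)
  then show ?thesis by (rule DERIV_imp_deriv)
qed

end

locale ball_weight = exp_moment_weight W lam for W :: "real measure" and lam :: real +
  fixes S :: real
  assumes mean_one: "(\<integral>w. w \<partial>W) = 1"
    and deriv2_mgf_le: "\<forall>z. \<bar>z\<bar> < lam / 2 \<longrightarrow> deriv (deriv (mgf W)) z \<le> 2 * S"
begin

lemma mgf_le_quadratic:
  assumes z: "\<bar>z\<bar> \<le> lam / 2"
  shows "mgf W z \<le> 1 + z + S * z\<^sup>2"
proof -
  have bound: "mgf W z \<le> 1 + z + S * z\<^sup>2" if t: "\<bar>t\<bar> < lam / 2"
    and expansion: "mgf_deriv 0 z
      = (\<Sum>m<2. mgf_deriv m 0 / fact m * z ^ m) + mgf_deriv 2 t / fact 2 * z ^ 2" for t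
  proof -
    have "mgf W z = 1 + z + mgf_deriv 2 t / 2 * z\<^sup>2"
      using expansion mean_one prob_space by (simp add: mgf_eq_mgf_deriv mgf_deriv_def numeral_2_eq_2)
    moreover have "mgf_deriv 2 t \<le> 2 * S"
      using deriv2_mgf_le deriv_deriv_mgf[of t] t lam_pos by auto
    then have "mgf_deriv 2 t * z\<^sup>2 \<le> 2 * S * z\<^sup>2" by (rule mult_right_mono) simp
    ultimately show ?thesis by simp
  qed
  have derivs: "DERIV (mgf_deriv m) t :> mgf_deriv (Suc m) t" if "\<bar>t\<bar> \<le> \<bar>z\<bar>" for m t
    using mgf_deriv_has_derivative[of t m] that z lam_pos by simp
  \<comment> \<open>the Lagrange point lies strictly between 0 and z, so the open bound on M'' suffices\<close>
  consider "z = 0" | "z > 0" | "z < 0" by linarith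
  then show ?thesis
  proof cases
    case 1
    then show ?thesis using prob_space by (simp add: mgf_def)
  next
    case 2
    then obtain t where "0 < t" "t < z"
      "mgf_deriv 0 z = (\<Sum>m<2. mgf_deriv m 0 / fact m * z ^ m) + mgf_deriv 2 t / fact 2 * z ^ 2"
      using Maclaurin[of z 2 mgf_deriv] derivs by force
    then show ?thesis using bound z by force
  next
    case 3
    then obtain t where "z < t" "t < 0"
      "mgf_deriv 0 z = (\<Sum>m<2. mgf_deriv m 0 / fact m * z ^ m) + mgf_deriv 2 t / fact 2 * z ^ 2"
      using Maclaurin_minus[of z 2 mgf_deriv] derivs by force
    then show ?thesis using bound z by force
  qed
qed

end

section \<open>Slot vectors\<close>

lemma weight_le_total_slots: "k < n \<Longrightarrow> Nw k \<le> total_slots n Nw"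
  unfolding total_slots_def by (rule member_le_sum) auto

lemma total_slots_ge_one: "1 \<le> n \<Longrightarrow> \<forall>i<n. 0 < Nw i \<Longrightarrow> 1 \<le> total_slots n Nw"
  using weight_le_total_slots[of 0 n Nw] by auto

lemma sum_list_map_rev_sort:
  fixes f :: "'a::linorder \<Rightarrow> 'b::comm_monoid_add"
  shows "sum_list (map f (rev (sort xs))) = sum_list (map f xs)"
proof -
  have "mset (map f (rev (sort xs))) = mset (map f xs)" by simp
  then show ?thesis by (metis sum_mset_sum_list)
qed

lemma sum_list_map_concat_replicate:
  "sum_list (map f (concat (map (\<lambda>i. replicate (m i) (y i)) [0..<n]))) = (\<Sum>k<n. of_nat (m k) * f (y k))"
  by (induction n) (simp_all add: sum_list_replicate)

lemma length_filter_concat_replicate: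
  "length (filter P (concat (map (\<lambda>i. replicate (m i) (y i)) [0..<n]))) = (\<Sum>k<n. if P (y k) then m k else 0)"
  by (induction n) simp_all

lemma length_slot_vector: "length (slot_vector n Nw L) = total_slots n Nw"
  using length_filter_concat_replicate[of "\<lambda>_. True"]
  by (simp add: slot_vector_def total_slots_def flip: length_concat)

lemma Phi_slot_vector: "Phi a (slot_vector n Nw L) = (\<Sum>k<n. real (Nw k) * exp (a * norm_value n Nw L k))"
  unfolding Phi_def slot_vector_def sum_list_map_rev_sort sum_list_map_concat_replicate ..

lemma norm_value_add_load:
  assumes "k < n"
  shows "norm_value n Nw (L(k := L k + w)) b =
    norm_value n Nw L b + (if b = k then w / real (Nw k) else 0) - w / real (total_slots n Nw)"
proof -
  have "(\<Sum>i<n. (L(k := L k + w)) i) = (\<Sum>i<n. L i + (if i = k then w else 0))"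
    by (intro sum.cong) auto
  also have "\<dots> = (\<Sum>i<n. L i) + w" using assms by (simp add: sum.distrib)
  finally show ?thesis by (auto simp: norm_value_def add_divide_distrib)
qed

lemma Phi_slot_vector_add_load:
  assumes "k < n"
  shows "Phi a (slot_vector n Nw (L(k := L k + w))) =
    (\<Sum>b<n. real (Nw b) * exp (a * norm_value n Nw L b) *
        exp (((if b = k then a / real (Nw k) else 0) - a / real (total_slots n Nw)) * w))"
  unfolding Phi_slot_vector norm_value_add_load[OF assms]
  by (intro sum.cong refl) (simp add: algebra_simps flip: exp_add)

lemma length_filter_greater_le_if_rev_sort_nth_le:
  fixes l :: "'a::linorder list"
  assumes m: "m < length l" and le: "rev (sort l) ! m \<le> c"
  shows "length (filter (\<lambda>x. c < x) l) \<le> m"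
proof -
  define ys where "ys = rev (sort l)"
  have "ys ! j \<le> c" if "m \<le> j" "j < length ys" for j
  proof -
    have "sort l ! (length l - Suc j) \<le> sort l ! (length l - Suc m)"
      using that m by (intro sorted_nth_mono) (auto simp: ys_def)
    then show ?thesis using that m le by (simp add: ys_def rev_nth)
  qed
  then have "filter (\<lambda>x. c < x) (drop m ys) = []"
    by (auto simp: filter_empty_conv in_set_conv_nth not_less)
  then have "filter (\<lambda>x. c < x) ys = filter (\<lambda>x. c < x) (take m ys)"
    by (metis append_Nil2 append_take_drop_id filter_append)
  then have "length (filter (\<lambda>x. c < x) ys) \<le> m"
    by (metis length_filter_le length_take min.bounded_iff nle_le)
  moreover have "mset (filter (\<lambda>x. c < x) ys) = mset (filter (\<lambda>x. c < x) l)"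
    by (simp add: ys_def)
  ultimately show ?thesis by (metis size_mset)
qed

lemma nat_ceiling_minus_one_bounds:
  fixes x :: real assumes "0 < x" "x \<le> real N"
  shows "nat \<lceil>x\<rceil> - 1 < N" and "real (nat \<lceil>x\<rceil> - 1) \<le> x"
proof -
  have "1 \<le> \<lceil>x\<rceil>" "\<lceil>x\<rceil> \<le> int N" using assms by (auto simp: ceiling_le)
  then show "nat \<lceil>x\<rceil> - 1 < N" by linarith
  have "real_of_int \<lceil>x\<rceil> - 1 < x" using ceiling_correct by blast
  then show "real (nat \<lceil>x\<rceil> - 1) \<le> x" using \<open>1 \<le> \<lceil>x\<rceil>\<close> by (simp add: of_nat_diff)
qed

lemma positive_slot_mass_le:
  assumes N: "total_slots n Nw \<ge> 1"
    and slot: "slot_vector n Nw L ! (nat \<lceil>3 * real (total_slots n Nw) / 4\<rceil> - 1) \<le> 0"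
  shows "(\<Sum>k\<in>{k\<in>{..<n}. 0 < norm_value n Nw L k}. real (Nw k)) \<le> 3 * real (total_slots n Nw) / 4"
proof -
  define x where "x = 3 * real (total_slots n Nw) / 4"
  define l where "l = concat (map (\<lambda>i. replicate (Nw i) (norm_value n Nw L i)) [0..<n])"
  have x: "0 < x" "x \<le> real (total_slots n Nw)" using N by (auto simp: x_def)
  have "length (filter (\<lambda>v. 0 < v) l) \<le> nat \<lceil>x\<rceil> - 1"
  proof (rule length_filter_greater_le_if_rev_sort_nth_le)
    show "nat \<lceil>x\<rceil> - 1 < length l"
      using nat_ceiling_minus_one_bounds(1)[OF x] length_slot_vector[of n Nw L]
      by (simp add: slot_vector_def l_def)
    show "rev (sort l) ! (nat \<lceil>x\<rceil> - 1) \<le> 0"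
      using slot by (simp add: slot_vector_def l_def x_def)
  qed
  then have "real (\<Sum>k<n. if 0 < norm_value n Nw L k then Nw k else 0) \<le> x"
    using nat_ceiling_minus_one_bounds(2)[OF x]
    unfolding l_def length_filter_concat_replicate by linarith
  moreover have "(\<Sum>k\<in>{k\<in>{..<n}. 0 < norm_value n Nw L k}. real (Nw k)) =
      real (\<Sum>k<n. if 0 < norm_value n Nw L k then Nw k else 0)"
    by (subst sum.inter_filter) (auto simp: of_nat_sum intro!: sum.cong)
  ultimately show ?thesis unfolding x_def by linarith
qed

section \<open>Chosen bin of a random pair\<close>

lemma chosen_bin_in: "\<forall>i j. tb i j = i \<or> tb i j = j \<Longrightarrow> chosen_bin Nw tb L i j \<in> {i, j}"
  unfolding chosen_bin_def by auto

lemma norm_value_chosen_bin_le: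
  assumes "\<forall>i j. tb i j = i \<or> tb i j = j"
  shows "norm_value n Nw L (chosen_bin Nw tb L i j) \<le> norm_value n Nw L i"
    and "norm_value n Nw L (chosen_bin Nw tb L i j) \<le> norm_value n Nw L j"
  using assms[rule_format, of i j] unfolding chosen_bin_def norm_value_def by auto

lemma sum_mult_shift_positive_part:
  fixes f g :: "'a \<Rightarrow> real"
  assumes "finite K" and "\<forall>k\<in>K. 0 \<le> g k"
  shows "(\<Sum>k\<in>K. f k * g k)
    = (\<Sum>k\<in>K. f k * (if 0 < g k then g k - m else 0)) + m * (\<Sum>k\<in>{k\<in>K. 0 < g k}. f k)"
proof -
  have "(\<Sum>k\<in>K. f k * g k) = (\<Sum>k\<in>K. f k * (if 0 < g k then g k - m else 0) + m * (if 0 < g k then f k else 0))"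
    using assms(2) by (intro sum.cong refl) (force simp: algebra_simps)
  then show ?thesis
    using assms(1) by (simp add: sum.distrib sum_distrib_left sum.inter_filter)
qed

lemma sum_mult_le_of_superlevel_sums_le:
  fixes q s g :: "'a \<Rightarrow> real"
  assumes K: "finite K" and g: "\<forall>k\<in>K. 0 \<le> g k"
    and superlevel: "\<forall>t>0. (\<Sum>k\<in>{k\<in>K. t \<le> g k}. q k) \<le> (\<Sum>k\<in>{k\<in>K. t \<le> g k}. s k)"
  shows "(\<Sum>k\<in>K. q k * g k) \<le> (\<Sum>k\<in>K. s k * g k)"
  using g superlevel
proof (induction "card {k\<in>K. 0 < g k}" arbitrary: g rule: less_induct)
  case less
  define P where "P = {k\<in>K. 0 < g k}"
  show ?case
  proof (cases "P = {}")
    case True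
    then have "\<forall>k\<in>K. g k = 0" using less.prems(1) by (force simp: P_def)
    then show ?thesis by simp
  next
    case False
    have P: "finite P" using K by (simp add: P_def)
    define m where "m = Min (g ` P)"
    have "m \<in> g ` P" unfolding m_def using P False by (intro Min_in) auto
    then obtain k0 where k0: "k0 \<in> P" "g k0 = m" by auto
    have m: "0 < m" "\<And>k. k \<in> P \<Longrightarrow> m \<le> g k"
      using k0 P by (auto simp: P_def m_def)
    \<comment> \<open>lower every positive value by the least one, which removes at least one level\<close>
    define g' where "g' k = (if 0 < g k then g k - m else 0)" for k
    have "{k\<in>K. 0 < g' k} \<subset> P"
      using k0 by (auto simp: g'_def P_def)
    then have card: "card {k\<in>K. 0 < g' k} < card {k\<in>K. 0 < g k}"
      using psubset_card_mono[OF P] by (simp add: P_def)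
    have superlevel': "\<forall>t>0. (\<Sum>k\<in>{k\<in>K. t \<le> g' k}. q k) \<le> (\<Sum>k\<in>{k\<in>K. t \<le> g' k}. s k)"
    proof (intro allI impI)
      fix t :: real assume t: "t > 0"
      then have "{k\<in>K. t \<le> g' k} = {k\<in>K. t + m \<le> g k}"
        using m(1) by (auto simp: g'_def)
      then show "(\<Sum>k\<in>{k\<in>K. t \<le> g' k}. q k) \<le> (\<Sum>k\<in>{k\<in>K. t \<le> g' k}. s k)"
        using less.prems(2) t m(1) by auto
    qed
    have IH: "(\<Sum>k\<in>K. q k * g' k) \<le> (\<Sum>k\<in>K. s k * g' k)"
      using less.hyps[OF card _ superlevel'] m by (auto simp: g'_def P_def)
    have top: "(\<Sum>k\<in>P. q k) \<le> (\<Sum>k\<in>P. s k)"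
    proof -
      have "P = {k\<in>K. m \<le> g k}" using m by (auto simp: P_def)
      then show ?thesis using less.prems(2) m(1) by auto
    qed
    note split = sum_mult_shift_positive_part[OF K less.prems(1), of _ m, folded g'_def P_def]
    show ?thesis
      unfolding split using IH top m(1) by (intro add_mono mult_left_mono) simp_all
  qed
qed

lemma sum_pairs_reindex:
  fixes r :: "nat \<Rightarrow> nat \<Rightarrow> real"
  assumes "\<forall>i<n. \<forall>j<n. c i j < n"
  shows "(\<Sum>i<n. \<Sum>j<n. r i j * h (c i j)) = (\<Sum>k<n. (\<Sum>i<n. \<Sum>j<n. if c i j = k then r i j else 0) * h k)"
proof -
  have "(\<Sum>i<n. \<Sum>j<n. r i j * h (c i j)) = (\<Sum>i<n. \<Sum>j<n. \<Sum>k<n. if c i j = k then r i j * h k else 0)"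
    using assms by (intro sum.cong refl) (simp add: sum.delta)
  also have "\<dots> = (\<Sum>i<n. \<Sum>k<n. \<Sum>j<n. if c i j = k then r i j * h k else 0)"
    by (rule sum.cong[OF refl]) (rule sum.swap)
  also have "\<dots> = (\<Sum>k<n. \<Sum>i<n. \<Sum>j<n. if c i j = k then r i j * h k else 0)"
    by (rule sum.swap)
  also have "\<dots> = (\<Sum>k<n. (\<Sum>i<n. \<Sum>j<n. if c i j = k then r i j else 0) * h k)"
    unfolding sum_distrib_right by (intro sum.cong refl) simp
  finally show ?thesis .
qed

lemma sum_pairs_into_upset_le_square:
  fixes p :: "nat \<Rightarrow> real"
  assumes U: "U \<subseteq> {..<n}" and p: "\<forall>i. 0 \<le> p i"
    and upset: "\<forall>i<n. \<forall>j<n. c i j \<in> U \<longrightarrow> i \<in> U \<and> j \<in> U"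
  shows "(\<Sum>i<n. \<Sum>j<n. if c i j \<in> U then p i * p j else 0) \<le> (\<Sum>i\<in>U. p i)\<^sup>2"
proof -
  have "(\<Sum>i<n. \<Sum>j<n. if c i j \<in> U then p i * p j else 0)
      \<le> (\<Sum>i<n. \<Sum>j<n. (if i \<in> U then p i else 0) * (if j \<in> U then p j else 0))"
    using upset p by (intro sum_mono) (auto simp: mult_nonneg_nonneg)
  also have "\<dots> = (\<Sum>i<n. if i \<in> U then p i else 0)\<^sup>2"
    by (simp add: power2_eq_square sum_product)
  also have "(\<Sum>i<n. if i \<in> U then p i else 0) = (\<Sum>i\<in>U. p i)"
    using U by (simp add: sum.inter_restrict[symmetric] Int_absorb1)
  finally show ?thesis .
qed

lemma sum_pairs_into_upset_le:
  fixes p s :: "nat \<Rightarrow> real"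
  assumes U: "U \<subseteq> {..<n}" and p_nonneg: "\<forall>i. 0 \<le> p i" and p_le: "\<forall>i<n. p i \<le> \<beta> * s i / N"
    and s_nonneg: "\<forall>k. 0 \<le> s k" and mass: "(\<Sum>k\<in>U. s k) \<le> M"
    and upset: "\<forall>i<n. \<forall>j<n. c i j \<in> U \<longrightarrow> i \<in> U \<and> j \<in> U"
  shows "(\<Sum>i<n. \<Sum>j<n. if c i j \<in> U then p i * p j else 0) \<le> \<beta>\<^sup>2 * M / N\<^sup>2 * (\<Sum>k\<in>U. s k)"
proof -
  define sU where "sU = (\<Sum>k\<in>U. s k)"
  have sU: "0 \<le> sU" "sU \<le> M" using s_nonneg mass by (simp_all add: sU_def sum_nonneg)
  have "(\<Sum>i\<in>U. p i) \<le> (\<Sum>i\<in>U. \<beta> * s i / N)"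
    using p_le U by (intro sum_mono) auto
  also have "\<dots> = \<beta> * sU / N" by (simp add: sU_def sum_divide_distrib sum_distrib_left)
  finally have "(\<Sum>i\<in>U. p i)\<^sup>2 \<le> (\<beta> * sU / N)\<^sup>2"
    using p_nonneg by (intro power_mono) (simp_all add: sum_nonneg)
  also have "\<dots> = \<beta>\<^sup>2 / N\<^sup>2 * (sU * sU)" by (simp add: power2_eq_square)
  also have "\<dots> \<le> \<beta>\<^sup>2 / N\<^sup>2 * (M * sU)" using sU by (intro mult_left_mono mult_right_mono) auto
  finally show ?thesis
    using sum_pairs_into_upset_le_square[OF U p_nonneg upset] by (simp add: sU_def)
qed

lemma sum_pairs_exp_chosen_le:
  fixes p y s :: "nat \<Rightarrow> real" and c :: "nat \<Rightarrow> nat \<Rightarrow> nat"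
  assumes p_nonneg: "\<forall>i. 0 \<le> p i" and p_sum: "(\<Sum>i<n. p i) = 1"
    and p_le: "\<forall>i<n. p i \<le> \<beta> * s i / N" and s_nonneg: "\<forall>k. 0 \<le> s k"
    and chosen: "\<forall>i<n. \<forall>j<n. c i j < n \<and> y (c i j) \<le> y i \<and> y (c i j) \<le> y j"
    and mass: "(\<Sum>k\<in>{k\<in>{..<n}. 0 < y k}. s k) \<le> M" and a: "0 \<le> a"
  shows "(\<Sum>i<n. \<Sum>j<n. p i * p j * exp (a * y (c i j)))
    \<le> \<beta>\<^sup>2 * M / N\<^sup>2 * (\<Sum>k<n. s k * exp (a * y k)) + 1"
proof -
  define \<kappa> where "\<kappa> = \<beta>\<^sup>2 * M / N\<^sup>2"
  have \<kappa>: "0 \<le> \<kappa>"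
    using mass s_nonneg sum_nonneg[of "{k\<in>{..<n}. 0 < y k}" s] by (simp add: \<kappa>_def)
  \<comment> \<open>only bins of positive value matter, the others contribute at most 1 in total\<close>
  define g where "g k = (if 0 < y k then exp (a * y k) else 0)" for k
  define q where "q k = (\<Sum>i<n. \<Sum>j<n. if c i j = k then p i * p j else 0)" for k
  have reindex: "(\<Sum>i<n. \<Sum>j<n. p i * p j * h (c i j)) = (\<Sum>k<n. q k * h k)" for h
    unfolding q_def using chosen by (intro sum_pairs_reindex) simp
  have g_chosen: "g (c i j) \<le> g i \<and> g (c i j) \<le> g j" if "i < n" "j < n" for i j
    using chosen[rule_format, OF that] a by (auto simp: g_def mult_left_mono)
  have "(\<Sum>i<n. \<Sum>j<n. p i * p j * exp (a * y (c i j))) \<le> (\<Sum>i<n. \<Sum>j<n. p i * p j * (g (c i j) + 1))"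
    using p_nonneg a by (intro sum_mono mult_left_mono) (auto simp: g_def mult_nonneg_nonpos)
  also have "\<dots> = (\<Sum>k<n. q k * g k) + 1"
    using reindex[of g] p_sum by (simp add: distrib_left sum.distrib flip: sum_product)
  also have "(\<Sum>k<n. q k * g k) \<le> (\<Sum>k<n. \<kappa> * s k * g k)"
  proof (rule sum_mult_le_of_superlevel_sums_le, safe)
    fix t :: real assume t: "0 < t"
    define U where "U = {k\<in>{..<n}. t \<le> g k}"
    have U_pos: "U \<subseteq> {k\<in>{..<n}. 0 < y k}" using t by (auto simp: U_def g_def split: if_splits)
    have "(\<Sum>k\<in>U. q k) = (\<Sum>k<n. q k * (if k \<in> U then 1 else 0))"
      unfolding U_def by (subst sum.inter_filter) (auto intro!: sum.cong)
    also have "\<dots> = (\<Sum>i<n. \<Sum>j<n. if c i j \<in> U then p i * p j else 0)"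
      unfolding reindex[symmetric] by (intro sum.cong refl) simp
    also have "\<dots> \<le> \<kappa> * (\<Sum>k\<in>U. s k)"
      unfolding \<kappa>_def
    proof (rule sum_pairs_into_upset_le[OF _ p_nonneg p_le s_nonneg])
      show "U \<subseteq> {..<n}" using U_pos by auto
      have "(\<Sum>k\<in>U. s k) \<le> (\<Sum>k\<in>{k\<in>{..<n}. 0 < y k}. s k)"
        using U_pos s_nonneg by (intro sum_mono2) auto
      then show "(\<Sum>k\<in>U. s k) \<le> M" using mass by linarith
      show "\<forall>i<n. \<forall>j<n. c i j \<in> U \<longrightarrow> i \<in> U \<and> j \<in> U"
        using g_chosen by (auto simp: U_def intro: order.trans)
    qed
    finally show "(\<Sum>k\<in>{k\<in>{..<n}. t \<le> g k}. q k) \<le> (\<Sum>k\<in>{k\<in>{..<n}. t \<le> g k}. \<kappa> * s k)"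
      by (simp add: U_def sum_distrib_left)
  qed (auto simp: g_def)
  also have "\<dots> \<le> \<kappa> * (\<Sum>k<n. s k * exp (a * y k))"
    using \<kappa> s_nonneg by (simp add: sum_distrib_left mult.assoc g_def mult_left_mono sum_mono)
  finally show ?thesis by (simp add: \<kappa>_def)
qed

section \<open>One step of the process\<close>

lemma expectation_pmf_pmf_eq_sum:
  fixes D :: "nat pmf" and f :: "nat \<Rightarrow> nat \<Rightarrow> real"
  assumes "set_pmf D \<subseteq> {..<n}"
  shows "measure_pmf.expectation D (\<lambda>i. measure_pmf.expectation D (\<lambda>j. f i j))
    = (\<Sum>i<n. \<Sum>j<n. pmf D i * pmf D j * f i j)"
proof -
  have "measure_pmf.expectation D g = (\<Sum>i<n. pmf D i * g i)" for g :: "nat \<Rightarrow> real"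
    using assms by (subst integral_measure_pmf_real[of "{..<n}"]) (auto simp: mult.commute)
  then show ?thesis by (simp add: sum_distrib_left mult.assoc)
qed

lemma step_constant_le_one:
  fixes S \<mu> a :: real
  assumes S: "1 \<le> S" and \<mu>: "\<mu> \<le> 1 / 3" and a: "0 < a" "a \<le> \<mu> / (8 * S)"
  shows "a + S * a\<^sup>2 \<le> 1"
proof -
  have "S * a * 8 \<le> \<mu>" using a S by (simp add: le_divide_eq mult_ac)
  then have Sa: "S * a \<le> 1 / 24" using \<mu> by linarith
  moreover have "a \<le> S * a" using S a by simp
  moreover have "S * a\<^sup>2 \<le> 1 * a"
    unfolding power2_eq_square mult.assoc[symmetric] using Sa a by (intro mult_right_mono) auto
  ultimately show ?thesis by simp
qed

lemma drift_coefficient_le: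
  fixes S \<mu> a N \<kappa> :: real
  assumes S: "1 \<le> S" and \<mu>: "0 < \<mu>" and a: "0 < a" "a \<le> \<mu> / (8 * S)"
    and N: "1 \<le> N" and \<kappa>: "\<kappa> \<le> (1 - 3 * \<mu> / 4) / N"
  shows "1 - a / N + S * a\<^sup>2 / N\<^sup>2 + (a + S * a\<^sup>2) * \<kappa> \<le> 1 - \<mu> * a / (2 * N)"
proof -
  define X where "X = S * a\<^sup>2"
  have "S * a \<le> \<mu> / 8" using a S by (simp add: le_divide_eq mult_ac)
  then have "X \<le> \<mu> / 8 * a"
    unfolding X_def power2_eq_square mult.assoc[symmetric] using a by (intro mult_right_mono) auto
  moreover have "0 \<le> X" using S by (simp add: X_def)
  moreover from this have "X / N \<le> X" using divide_left_mono[of 1 N X] N by simp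
  ultimately have X: "X \<le> \<mu> * a / 8" "0 \<le> X" "X / N \<le> X" by simp_all
  have "(a + X) * \<kappa> \<le> (a + X) * ((1 - 3 * \<mu> / 4) / N)"
    using \<kappa> X a by (intro mult_left_mono) auto
  have "- a + X / N + (a + X) * (1 - 3 * \<mu> / 4) = X / N + X - 3 / 4 * (\<mu> * a) - 3 / 4 * (\<mu> * X)"
    by (simp add: algebra_simps)
  then have key: "- a + X / N + (a + X) * (1 - 3 * \<mu> / 4) \<le> - (\<mu> * a / 2)"
    using X mult_nonneg_nonneg[OF less_imp_le[OF \<mu>] X(2)] by linarith
  have "1 - a / N + S * a\<^sup>2 / N\<^sup>2 + (a + S * a\<^sup>2) * \<kappa>
      \<le> 1 - a / N + X / N / N + (a + X) * ((1 - 3 * \<mu> / 4) / N)"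
    using \<open>(a + X) * \<kappa> \<le> _\<close> by (simp add: X_def power2_eq_square)
  also have "\<dots> = 1 + (- a + X / N + (a + X) * (1 - 3 * \<mu> / 4)) / N"
    using N by (simp add: field_simps)
  also have "\<dots> \<le> 1 + (- (\<mu> * a / 2)) / N"
    using key N by (intro add_left_mono divide_right_mono) auto
  finally show ?thesis by simp
qed

context ball_weight
begin

lemma mgf_bin_increment_le:
  fixes m N :: real
  assumes S: "0 \<le> S" and a: "0 < a" "a \<le> lam / 2" and m: "1 \<le> m" "m \<le> N"
  shows "m * mgf W (a / m - a / N) \<le> m * (1 - a / N + S * a\<^sup>2 / N\<^sup>2) + (a + S * a\<^sup>2)"
proof -
  have u: "a / N \<le> a / m" "a / m \<le> a" "0 \<le> a / N"
    using a m by (intro divide_left_mono, simp_all add: divide_le_eq)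
  have "(a / m - a / N)\<^sup>2 \<le> (a / m)\<^sup>2"
    using u by (intro power_mono) auto
  then have "S * (a / m - a / N)\<^sup>2 \<le> S * (a / m)\<^sup>2 + S * a\<^sup>2 / N\<^sup>2"
    using S by (simp add: mult_left_mono add_increasing2)
  moreover have "\<bar>a / m - a / N\<bar> \<le> lam / 2" using u a by linarith
  ultimately have "mgf W (a / m - a / N) \<le> (1 - a / N + S * a\<^sup>2 / N\<^sup>2) + a / m + S * a\<^sup>2 / m\<^sup>2"
    using mgf_le_quadratic[of "a / m - a / N"] by (simp add: power_divide)
  then have "m * mgf W (a / m - a / N) \<le> m * ((1 - a / N + S * a\<^sup>2 / N\<^sup>2) + a / m + S * a\<^sup>2 / m\<^sup>2)"
    using m by (intro mult_left_mono) auto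
  also have "\<dots> = m * (1 - a / N + S * a\<^sup>2 / N\<^sup>2) + a + S * a\<^sup>2 / m"
    using m by (simp add: field_simps power2_eq_square)
  also have "S * a\<^sup>2 / m \<le> S * a\<^sup>2"
    using divide_left_mono[of 1 m "S * a\<^sup>2"] m S by simp
  finally show ?thesis by simp
qed

lemma integral_Phi_add_load_le:
  assumes S: "0 \<le> S" and a: "0 < a" "a \<le> lam / 2"
    and k: "k < n" and Nw: "\<forall>i<n. 0 < Nw i"
  shows "(\<integral>w. Phi a (slot_vector n Nw (L(k := L k + w))) \<partial>W)
    \<le> (1 - a / real (total_slots n Nw) + S * a\<^sup>2 / (real (total_slots n Nw))\<^sup>2)
        * Phi a (slot_vector n Nw L) + (a + S * a\<^sup>2) * exp (a * norm_value n Nw L k)"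
proof -
  define N where "N = real (total_slots n Nw)"
  define A where "A = 1 - a / N + S * a\<^sup>2 / N\<^sup>2"
  define B where "B = a + S * a\<^sup>2"
  define z where "z b = (if b = k then a / real (Nw k) - a / N else - (a / N))" for b
  define e where "e b = exp (a * norm_value n Nw L b)" for b
  have Nk: "1 \<le> real (Nw k)" "real (Nw k) \<le> N"
    using Nw k weight_le_total_slots[OF k, of Nw] by (auto simp: N_def Suc_le_eq)
  have "a / N \<le> a" using a Nk by (simp add: divide_le_eq)
  moreover have "0 \<le> a / N" using a Nk by simp
  ultimately have aN: "0 \<le> a / N" "a / N \<le> lam / 2" using a by linarith+
  have mgf_z: "real (Nw b) * mgf W (z b) \<le> real (Nw b) * A + (if b = k then B else 0)" for b
  proof (cases "b = k")
    case False
    have "mgf W (- (a / N)) \<le> A"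
      using mgf_le_quadratic[of "- (a / N)"] aN by (simp add: A_def power_divide)
    then show ?thesis using False by (simp add: z_def mult_left_mono)
  qed (use mgf_bin_increment_le[OF S a Nk] in \<open>simp add: z_def A_def B_def\<close>)
  have ak: "a / N \<le> a / real (Nw k)" "a / real (Nw k) \<le> a"
    using a Nk by (intro divide_left_mono, simp_all add: divide_le_eq)
  have "\<bar>z b\<bar> < lam" for b
  proof -
    have "z b = a / real (Nw k) - a / N \<or> z b = - (a / N)" by (simp add: z_def)
    then show ?thesis using ak aN a unfolding abs_less_iff by (elim disjE) linarith+
  qed
  then have "integrable W (\<lambda>w. exp (z b * w))" for b
    using integrable_mgf_deriv[of "z b" 0] by simp
  moreover have "Phi a (slot_vector n Nw (L(k := L k + w))) = (\<Sum>b<n. e b * real (Nw b) * exp (z b * w))" for w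
    unfolding Phi_slot_vector_add_load[OF k] by (intro sum.cong refl) (simp add: z_def N_def e_def mult_ac)
  ultimately have "(\<integral>w. Phi a (slot_vector n Nw (L(k := L k + w))) \<partial>W)
      = (\<Sum>b<n. e b * (real (Nw b) * mgf W (z b)))"
    by (simp add: mgf_def mult.assoc)
  also have "\<dots> \<le> (\<Sum>b<n. e b * (real (Nw b) * A + (if b = k then B else 0)))"
    by (intro sum_mono mult_left_mono mgf_z) (simp add: e_def)
  also have "\<dots> = (\<Sum>b<n. A * (real (Nw b) * e b) + (if b = k then B * e k else 0))"
    by (intro sum.cong refl) (simp add: algebra_simps)
  also have "\<dots> = A * Phi a (slot_vector n Nw L) + B * e k"
    using k by (simp add: Phi_slot_vector e_def sum.distrib sum_distrib_left)
  finally show ?thesis by (simp add: A_def B_def N_def e_def)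
qed

lemma expected_Phi_next_load_le:
  assumes S: "1 \<le> S" and \<mu>: "0 < \<mu>" and a: "0 < a" "a \<le> \<mu> / (8 * S)" "a \<le> lam / 2"
    and n: "1 \<le> n" and Nw: "\<forall>i<n. 0 < Nw i" and \<beta>: "1 \<le> \<beta>" "\<beta>\<^sup>2 \<le> 4/3 - \<mu>"
    and D: "set_pmf D \<subseteq> {..<n}"
    and D_le: "\<forall>i<n. pmf D i \<le> \<beta> * real (Nw i) / real (total_slots n Nw)"
    and tb: "\<forall>i j. tb i j = i \<or> tb i j = j"
    and slot: "slot_vector n Nw L ! (nat \<lceil>3 * real (total_slots n Nw) / 4\<rceil> - 1) \<le> 0"
  shows "measure_pmf.expectation D (\<lambda>i. measure_pmf.expectation D (\<lambda>j.
        \<integral>w. Phi a (slot_vector n Nw (next_load Nw tb L i j w)) \<partial>W))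
     \<le> (1 - \<mu> * a / (2 * real (total_slots n Nw))) * Phi a (slot_vector n Nw L) + 1"
proof -
  define N where "N = real (total_slots n Nw)"
  define \<Phi> where "\<Phi> = Phi a (slot_vector n Nw L)"
  define A where "A = 1 - a / N + S * a\<^sup>2 / N\<^sup>2"
  define B where "B = a + S * a\<^sup>2"
  define \<kappa> where "\<kappa> = \<beta>\<^sup>2 * (3 * N / 4) / N\<^sup>2"
  define c where "c = chosen_bin Nw tb L"
  define e where "e k = exp (a * norm_value n Nw L k)" for k
  have N: "1 \<le> N" using total_slots_ge_one[OF n Nw] by (simp add: N_def)
  have \<mu>_le: "\<mu> \<le> 1 / 3" using \<beta>(2) one_le_power[OF \<beta>(1), of 2] by linarith
  have p_sum: "(\<Sum>i<n. pmf D i) = 1" using D by (intro sum_pmf_eq_1) auto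
  have c_lt: "c i j < n" if "i < n" "j < n" for i j
    using chosen_bin_in[OF tb, of Nw L i j] that by (auto simp: c_def)
  have one_step: "(\<integral>w. Phi a (slot_vector n Nw (next_load Nw tb L i j w)) \<partial>W) \<le> A * \<Phi> + B * e (c i j)"
    if "i < n" "j < n" for i j
    using integral_Phi_add_load_le[of a "c i j" n Nw L] c_lt[OF that] S a Nw
    by (simp add: next_load_def c_def Let_def A_def B_def N_def \<Phi>_def e_def)
  have chosen_exp: "(\<Sum>i<n. \<Sum>j<n. pmf D i * pmf D j * e (c i j)) \<le> \<kappa> * \<Phi> + 1"
    unfolding \<kappa>_def \<Phi>_def Phi_slot_vector e_def
  proof (rule sum_pairs_exp_chosen_le)
    show "(\<Sum>i<n. pmf D i) = 1" by (rule p_sum)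
    show "\<forall>i<n. \<forall>j<n. c i j < n \<and> norm_value n Nw L (c i j) \<le> norm_value n Nw L i
        \<and> norm_value n Nw L (c i j) \<le> norm_value n Nw L j"
      using c_lt norm_value_chosen_bin_le[OF tb] by (simp add: c_def)
    show "(\<Sum>k\<in>{k\<in>{..<n}. 0 < norm_value n Nw L k}. real (Nw k)) \<le> 3 * N / 4"
      using positive_slot_mass_le[OF _ slot] total_slots_ge_one[OF n Nw] by (simp add: N_def)
  qed (use D_le a in \<open>simp_all add: N_def\<close>)
  have "\<kappa> \<le> (1 - 3 * \<mu> / 4) / N"
    using \<beta>(2) N by (simp add: \<kappa>_def power2_eq_square field_simps)
  note drift = drift_coefficient_le[OF S \<mu> a(1,2) N this]
  have B: "0 \<le> B" "B \<le> 1"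
    using step_constant_le_one[OF S \<mu>_le a(1,2)] a S by (simp_all add: B_def)
  have \<Phi>: "0 \<le> \<Phi>" by (simp add: \<Phi>_def Phi_slot_vector sum_nonneg)
  have "measure_pmf.expectation D (\<lambda>i. measure_pmf.expectation D (\<lambda>j.
        \<integral>w. Phi a (slot_vector n Nw (next_load Nw tb L i j w)) \<partial>W))
      \<le> (\<Sum>i<n. \<Sum>j<n. pmf D i * pmf D j * (A * \<Phi> + B * e (c i j)))"
    unfolding expectation_pmf_pmf_eq_sum[OF D] by (intro sum_mono mult_left_mono one_step) auto
  also have "\<dots> = (\<Sum>i<n. pmf D i) * (\<Sum>j<n. pmf D j) * (A * \<Phi>)
      + B * (\<Sum>i<n. \<Sum>j<n. pmf D i * pmf D j * e (c i j))"
    by (simp add: algebra_simps sum.distrib sum_distrib_left sum_distrib_right)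
  also have "\<dots> = A * \<Phi> + B * (\<Sum>i<n. \<Sum>j<n. pmf D i * pmf D j * e (c i j))"
    by (simp add: p_sum)
  also have "\<dots> \<le> (A + B * \<kappa>) * \<Phi> + B"
    using mult_left_mono[OF chosen_exp B(1)] by (simp add: algebra_simps)
  also have "\<dots> \<le> (1 - \<mu> * a / (2 * N)) * \<Phi> + 1"
    using drift B \<Phi> by (intro add_mono mult_right_mono) (simp_all add: A_def B_def)
  finally show ?thesis by (simp add: N_def \<Phi>_def)
qed

end

lemma ball_weightI:
  assumes "prob_space W" "sets W = sets borel" "AE w in W. 0 \<le> w" "0 < lam"
    "integrable W (\<lambda>w. exp (lam * w))" "(\<integral>w. w \<partial>W) = 1"
    "\<forall>z. \<bar>z\<bar> < lam / 2 \<longrightarrow> deriv (deriv (mgf W)) z \<le> 2 * S"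
  shows "ball_weight W lam S"
  using assms by (intro ball_weight.intro exp_moment_weight.intro exp_moment_weight_axioms.intro
      ball_weight_axioms.intro)

theorem mainTheorem11:
  fixes S \<mu> :: real
  assumes "S \<ge> 1" and "\<mu> > 0"
  shows "\<exists>a0 > 0. \<forall>(n::nat) (Nw::nat \<Rightarrow> nat) (D::nat pmf) (\<alpha>::real) (\<beta>::real)
            (W::real measure) (lam::real) (a::real) (L::nat \<Rightarrow> real) (tb::nat \<Rightarrow> nat \<Rightarrow> nat).
     n \<ge> 1 \<longrightarrow> (\<forall>i<n. Nw i > 0) \<longrightarrow>
     \<alpha> \<ge> 1 \<longrightarrow> \<beta> \<ge> 1 \<longrightarrow> \<beta>\<^sup>2 \<le> 4/3 - \<mu> \<longrightarrow>
     set_pmf D \<subseteq> {..<n} \<longrightarrow>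
     (\<forall>i<n. real (Nw i) / (\<alpha> * real (total_slots n Nw)) \<le> pmf D i
            \<and> pmf D i \<le> \<beta> * real (Nw i) / real (total_slots n Nw)) \<longrightarrow>
     prob_space W \<longrightarrow> sets W = sets borel \<longrightarrow> (AE w in W. 0 \<le> w) \<longrightarrow>
     integrable W (\<lambda>w. w) \<longrightarrow> (\<integral>w. w \<partial>W) = 1 \<longrightarrow>
     lam > 0 \<longrightarrow> integrable W (\<lambda>w. exp (lam * w)) \<longrightarrow>
     (\<forall>z. \<bar>z\<bar> < lam / 2 \<longrightarrow> deriv (deriv (mgf W)) z \<le> 2 * S) \<longrightarrow>
     0 < a \<longrightarrow> a \<le> min a0 (lam / 2) \<longrightarrow>
     (\<forall>i<n. 0 \<le> L i) \<longrightarrow>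
     (\<forall>i j. tb i j = i \<or> tb i j = j) \<longrightarrow>
     slot_vector n Nw L ! (nat \<lceil>3 * real (total_slots n Nw) / 4\<rceil> - 1) \<le> 0 \<longrightarrow>
     measure_pmf.expectation D (\<lambda>i. measure_pmf.expectation D (\<lambda>j.
        \<integral>w. Phi a (slot_vector n Nw (next_load Nw tb L i j w)) \<partial>W))
     \<le> (1 - \<mu> * a / (2 * real (total_slots n Nw))) * Phi a (slot_vector n Nw L) + 1"
  using assms
  by (intro exI[of _ "\<mu> / (8 * S)"] conjI allI impI
      ball_weight.expected_Phi_next_load_le[OF ball_weightI]) auto
end
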